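(* The decision problem Maximum Matching cannot be expressed by an ESO universal Horn sentence, even assuming that the input structures come with a successor relation.
   Context: Maximum Matching: given a finite undirected graph $G=(V,E)$ with no self-loops and at most one edge between any pair of vertices, together with a non-negative integer $K$ (part of the input, varying from instance to instance, with $K \le |V|$), decide whether there is a matching $F \subseteq E$ (a set of pairwise vertex-disjoint edges) with $|F| \ge K$. Instances are given as finite structures over an input vocabulary containing the edge relation, a representation of $K$, and a successor relation (the successor relation of a linear order on the universe). ESO universal Horn logic consists of sentences $\exists S_1 \cdots \exists S_m\, \forall \bar{x}\, \psi$, with $S_i$ second-order relation variables and $\psi$ a quantifier-free conjunction of clauses, each containing at most one positive occurrence of an atom built from the quantified relations $S_i$ (literals over the input vocabulary are unrestricted). A problem is expressed by such a sentence if an input structure is a yes-instance exactly when it satisfies the sentence. *)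

theory Defs
  imports Main
begin

text \<open>Finite input structures over the vocabulary (E, Succ, Kr): the universe is
  {0..<univ_size}; E is the edge relation, Succ the successor relation, and K is
  represented by a unary relation Kr whose cardinality is K.\<close>

record input_struct =
  univ_size :: nat
  edge :: "nat \<Rightarrow> nat \<Rightarrow> bool"
  succ :: "nat \<Rightarrow> nat \<Rightarrow> bool"
  kset :: "nat set"

definition is_successor_on :: "nat \<Rightarrow> (nat \<Rightarrow> nat \<Rightarrow> bool) \<Rightarrow> bool" where
  "is_successor_on n S \<longleftrightarrow>
     (\<exists>p. bij_betw p {0..<n} {0..<n} \<and>
          (\<forall>x y. S x y \<longleftrightarrow> (x < n \<and> y < n \<and> p y = Suc (p x))))"

definition valid_instance :: "input_struct \<Rightarrow> bool" where
  "valid_instance A \<longleftrightarrow>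
     univ_size A > 0 \<and>
     (\<forall>x y. edge A x y \<longrightarrow> x < univ_size A \<and> y < univ_size A) \<and>
     (\<forall>x y. edge A x y \<longrightarrow> edge A y x) \<and>
     (\<forall>x. \<not> edge A x x) \<and>
     is_successor_on (univ_size A) (succ A) \<and>
     kset A \<subseteq> {0..<univ_size A}"

definition K_of :: "input_struct \<Rightarrow> nat" where
  "K_of A = card (kset A)"

definition is_matching :: "input_struct \<Rightarrow> nat set set \<Rightarrow> bool" where
  "is_matching A F \<longleftrightarrow>
     (\<forall>e\<in>F. \<exists>u v. e = {u, v} \<and> edge A u v) \<and>
     (\<forall>e\<in>F. \<forall>e'\<in>F. e \<noteq> e' \<longrightarrow> e \<inter> e' = {})"

definition max_matching_yes :: "input_struct \<Rightarrow> bool" where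
  "max_matching_yes A \<longleftrightarrow> (\<exists>F. is_matching A F \<and> card F \<ge> K_of A)"

datatype atom =
    AE nat nat
  | ASucc nat nat
  | AK nat
  | AEq nat nat
  | AS nat "nat list"

datatype lit = Pos atom | Neg atom

type_synonym clause = "lit list"

text \<open>A sentence \<open>\<exists>S_0..S_{m-1} \<forall>x. \<psi>\<close>: rel_arities of S_0..S_{m-1} and the clauses of \<psi>.\<close>
record eso_horn =
  rel_arities :: "nat list"
  matrix :: "clause list"

fun is_so_atom :: "atom \<Rightarrow> bool" where
  "is_so_atom (AS _ _) = True"
| "is_so_atom _ = False"

fun is_pos_so_lit :: "lit \<Rightarrow> bool" where
  "is_pos_so_lit (Pos a) = is_so_atom a"
| "is_pos_so_lit (Neg _) = False"

fun atom_wf :: "nat list \<Rightarrow> atom \<Rightarrow> bool" where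
  "atom_wf ar (AS i xs) \<longleftrightarrow> i < length ar \<and> length xs = ar ! i"
| "atom_wf ar _ \<longleftrightarrow> True"

fun lit_atom :: "lit \<Rightarrow> atom" where
  "lit_atom (Pos a) = a"
| "lit_atom (Neg a) = a"

definition wf_horn :: "eso_horn \<Rightarrow> bool" where
  "wf_horn \<phi> \<longleftrightarrow>
     (\<forall>c\<in>set (matrix \<phi>).
        (\<forall>l\<in>set c. atom_wf (rel_arities \<phi>) (lit_atom l)) \<and>
        length (filter is_pos_so_lit c) \<le> 1)"

fun atom_holds :: "input_struct \<Rightarrow> (nat \<Rightarrow> nat list set) \<Rightarrow> (nat \<Rightarrow> nat) \<Rightarrow> atom \<Rightarrow> bool" where
  "atom_holds A R v (AE x y) = edge A (v x) (v y)"
| "atom_holds A R v (ASucc x y) = succ A (v x) (v y)"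
| "atom_holds A R v (AK x) = (v x \<in> kset A)"
| "atom_holds A R v (AEq x y) = (v x = v y)"
| "atom_holds A R v (AS i xs) = (map v xs \<in> R i)"

fun lit_holds :: "input_struct \<Rightarrow> (nat \<Rightarrow> nat list set) \<Rightarrow> (nat \<Rightarrow> nat) \<Rightarrow> lit \<Rightarrow> bool" where
  "lit_holds A R v (Pos a) = atom_holds A R v a"
| "lit_holds A R v (Neg a) = (\<not> atom_holds A R v a)"

definition sat_horn :: "input_struct \<Rightarrow> eso_horn \<Rightarrow> bool" where
  "sat_horn A \<phi> \<longleftrightarrow>
     (\<exists>R. (\<forall>i < length (rel_arities \<phi>).
             R i \<subseteq> {xs. length xs = rel_arities \<phi> ! i \<and> set xs \<subseteq> {0..<univ_size A}}) \<and>
          (\<forall>v. (\<forall>x. v x < univ_size A) \<longrightarrow>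
               (\<forall>c\<in>set (matrix \<phi>). \<exists>l\<in>set c. lit_holds A R v l)))"

definition expresses :: "eso_horn \<Rightarrow> (input_struct \<Rightarrow> bool) \<Rightarrow> bool" where
  "expresses \<phi> P \<longleftrightarrow> (\<forall>A. valid_instance A \<longrightarrow> (sat_horn A \<phi> \<longleftrightarrow> P A))"

end

theory Submission
  imports Defs
begin

text \<open>An ESO universal sentence is preserved under induced substructures: pull the witnessing
  relations back along the embedding, and every assignment into the substructure becomes one into
  the big structure. A single edge with K = 1 has a matching of size 1, but its substructure on one
  vertex, which is again an instance with a successor relation, has none. So Maximum Matching is
  not closed under substructures, and no such sentence, Horn or not, can express it.\<close>

definition is_embedding :: "(nat \<Rightarrow> nat) \<Rightarrow> input_struct \<Rightarrow> input_struct \<Rightarrow> bool" where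
  "is_embedding f B A \<longleftrightarrow>
     inj_on f {0..<univ_size B} \<and>
     (\<forall>x < univ_size B. f x < univ_size A) \<and>
     (\<forall>x < univ_size B. \<forall>y < univ_size B.
        (edge B x y \<longleftrightarrow> edge A (f x) (f y)) \<and> (succ B x y \<longleftrightarrow> succ A (f x) (f y))) \<and>
     (\<forall>x < univ_size B. x \<in> kset B \<longleftrightarrow> f x \<in> kset A)"

lemma atom_holds_embedding:
  assumes f: "is_embedding f B A" and v: "\<forall>x. v x < univ_size B"
  shows "atom_holds B (\<lambda>i. {xs. set xs \<subseteq> {0..<univ_size B} \<and> map f xs \<in> R i}) v a
         \<longleftrightarrow> atom_holds A R (f \<circ> v) a"
proof (cases a)
  case (AEq x y)
  have "v x \<in> {0..<univ_size B}" "v y \<in> {0..<univ_size B}" using v by auto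
  then show ?thesis
    using f AEq unfolding is_embedding_def by (auto dest: inj_onD)
qed (use f v in \<open>auto simp: is_embedding_def\<close>)

lemma sat_horn_embedding:
  assumes f: "is_embedding f B A" and sat: "sat_horn A \<phi>"
  shows "sat_horn B \<phi>"
proof -
  from sat obtain R where
    R_arity: "\<forall>i < length (rel_arities \<phi>).
       R i \<subseteq> {xs. length xs = rel_arities \<phi> ! i \<and> set xs \<subseteq> {0..<univ_size A}}" and
    R_models: "\<forall>v. (\<forall>x. v x < univ_size A) \<longrightarrow>
       (\<forall>c\<in>set (matrix \<phi>). \<exists>l\<in>set c. lit_holds A R v l)"
    unfolding sat_horn_def by blast
  define R' where "R' = (\<lambda>i. {xs. set xs \<subseteq> {0..<univ_size B} \<and> map f xs \<in> R i})"
  have "R' i \<subseteq> {xs. length xs = rel_arities \<phi> ! i \<and> set xs \<subseteq> {0..<univ_size B}}"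
    if "i < length (rel_arities \<phi>)" for i
    using R_arity that unfolding R'_def by fastforce
  moreover have "\<forall>c\<in>set (matrix \<phi>). \<exists>l\<in>set c. lit_holds B R' v l"
    if v: "\<forall>x. v x < univ_size B" for v
  proof -
    have "\<forall>x. (f \<circ> v) x < univ_size A"
      using f v unfolding is_embedding_def by simp
    with R_models have "\<forall>c\<in>set (matrix \<phi>). \<exists>l\<in>set c. lit_holds A R (f \<circ> v) l"
      by blast
    moreover have "lit_holds B R' v l \<longleftrightarrow> lit_holds A R (f \<circ> v) l" for l
      using atom_holds_embedding[OF f v] unfolding R'_def by (cases l) simp_all
    ultimately show ?thesis by simp
  qed
  ultimately show ?thesis
    unfolding sat_horn_def by blast
qed

lemma expresses_closed_under_embedding:
  assumes "expresses \<phi> P" "valid_instance A" "valid_instance B" "is_embedding f B A" "P A"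
  shows "P B"
  using assms sat_horn_embedding unfolding expresses_def by blast

definition single_edge :: input_struct where
  "single_edge = \<lparr>univ_size = 2, edge = (\<lambda>x y. {x, y} = {0, 1}),
                  succ = (\<lambda>x y. x = 0 \<and> y = 1), kset = {0}\<rparr>"

definition single_vertex :: input_struct where
  "single_vertex = \<lparr>univ_size = 1, edge = (\<lambda>x y. False), succ = (\<lambda>x y. False), kset = {0}\<rparr>"

lemma valid_instance_single_edge: "valid_instance single_edge"
  unfolding valid_instance_def single_edge_def is_successor_on_def
  by (auto intro!: exI[of _ id] simp: doubleton_eq_iff)

lemma valid_instance_single_vertex: "valid_instance single_vertex"
  unfolding valid_instance_def single_vertex_def is_successor_on_def
  by (auto intro!: exI[of _ id])

lemma is_embedding_single_vertex: "is_embedding id single_vertex single_edge"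
  unfolding is_embedding_def single_vertex_def single_edge_def by auto

lemma max_matching_yes_single_edge: "max_matching_yes single_edge"
  unfolding max_matching_yes_def K_of_def is_matching_def single_edge_def
  by (intro exI[of _ "{{0, 1}}"]) auto

lemma not_max_matching_yes_single_vertex: "\<not> max_matching_yes single_vertex"
proof
  assume "max_matching_yes single_vertex"
  then obtain F where "is_matching single_vertex F" "card F \<ge> K_of single_vertex"
    unfolding max_matching_yes_def by blast
  moreover have "K_of single_vertex = 1"
    unfolding K_of_def single_vertex_def by simp
  ultimately have "F \<noteq> {}" "is_matching single_vertex F" by auto
  then show False
    unfolding is_matching_def single_vertex_def by auto
qed

theorem lemma1:
  shows "\<not> (\<exists>\<phi>. wf_horn \<phi> \<and> expresses \<phi> max_matching_yes)"
proof
  assume "\<exists>\<phi>. wf_horn \<phi> \<and> expresses \<phi> max_matching_yes"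
  then obtain \<phi> where "expresses \<phi> max_matching_yes" by blast
  then have "max_matching_yes single_vertex"
    using expresses_closed_under_embedding valid_instance_single_edge
      valid_instance_single_vertex is_embedding_single_vertex max_matching_yes_single_edge
    by blast
  with not_max_matching_yes_single_vertex show False ..
qed

end
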